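(* Let $G$ be a grid-labelled graph of type $(a,b)$ with at least one edge. If $\rho(G)$ is separable, then $D(G)=D(\Gamma(G))$, i.e. every vertex has the same degree in $G$ and in $\Gamma(G)$.
   Context: A grid-labelled graph of type $(a,b)$ is a simple graph $G$ whose vertex set is the grid $[a]\times[b]$; $D(G)$ denotes its (diagonal) degree matrix and $L(G)=D(G)-A(G)$ its combinatorial Laplacian. If $G$ has $m\ge1$ edges, $\rho(G)=L(G)/(2m)$, viewed as a density matrix on $\mathbb{C}^a\otimes\mathbb{C}^b$ with vertex $(i,j)$ corresponding to $|i\rangle\otimes|j\rangle$. Separable means a convex combination of tensor products of density matrices. The partial transpose of $G$ is the grid-labelled graph $\Gamma(G)$ of type $(a,b)$ with edge set $\{\{(k,j),(i,l)\}:\{(i,j),(k,l)\}\in E(G)\}$ (horizontal and vertical edges are unchanged; each diagonal edge is replaced by its "transposed" edge). *)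

theory Defs
  imports Complex_Main "Jordan_Normal_Form.Matrix"
begin

text \<open>Grid vertices are 0-based: the grid [a] x [b] is {0..<a} x {0..<b}.
  A simple graph is given by its edge set, a set of 2-element vertex sets.\<close>

definition grid :: "nat \<Rightarrow> nat \<Rightarrow> (nat \<times> nat) set" where
  "grid a b = {0..<a} \<times> {0..<b}"

definition grid_graph :: "nat \<Rightarrow> nat \<Rightarrow> (nat \<times> nat) set set \<Rightarrow> bool" where
  "grid_graph a b E \<longleftrightarrow>
     (\<forall>e\<in>E. \<exists>u v. e = {u, v} \<and> u \<noteq> v \<and> u \<in> grid a b \<and> v \<in> grid a b)"

definition degree :: "(nat \<times> nat) set set \<Rightarrow> nat \<times> nat \<Rightarrow> nat" where
  "degree E v = card {e\<in>E. v \<in> e}"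

text \<open>Vertex (i,j) corresponds to basis vector |i> (x) |j>, i.e. index i*b+j;
  index k corresponds to vertex (k div b, k mod b).\<close>

definition vtx :: "nat \<Rightarrow> nat \<Rightarrow> nat \<times> nat" where
  "vtx b k = (k div b, k mod b)"

definition degree_mat :: "nat \<Rightarrow> nat \<Rightarrow> (nat \<times> nat) set set \<Rightarrow> complex mat" where
  "degree_mat a b E = mat (a*b) (a*b)
     (\<lambda>(k,l). if k = l then of_nat (degree E (vtx b k)) else 0)"

definition adjacency_mat :: "nat \<Rightarrow> nat \<Rightarrow> (nat \<times> nat) set set \<Rightarrow> complex mat" where
  "adjacency_mat a b E = mat (a*b) (a*b)
     (\<lambda>(k,l). if {vtx b k, vtx b l} \<in> E then 1 else 0)"

definition laplacian_mat :: "nat \<Rightarrow> nat \<Rightarrow> (nat \<times> nat) set set \<Rightarrow> complex mat" where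
  "laplacian_mat a b E = degree_mat a b E - adjacency_mat a b E"

definition rho :: "nat \<Rightarrow> nat \<Rightarrow> (nat \<times> nat) set set \<Rightarrow> complex mat" where
  "rho a b E = (1 / (2 * of_nat (card E))) \<cdot>\<^sub>m laplacian_mat a b E"

definition partial_transpose :: "(nat \<times> nat) set set \<Rightarrow> (nat \<times> nat) set set" where
  "partial_transpose E = {{(k, j), (i, l)} | i j k l. {(i, j), (k, l)} \<in> E}"

definition kron :: "complex mat \<Rightarrow> complex mat \<Rightarrow> complex mat" where
  "kron A B = mat (dim_row A * dim_row B) (dim_col A * dim_col B)
     (\<lambda>(r,c). A $$ (r div dim_row B, c div dim_col B) * B $$ (r mod dim_row B, c mod dim_col B))"

definition hermitian_mat :: "nat \<Rightarrow> complex mat \<Rightarrow> bool" where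
  "hermitian_mat n A \<longleftrightarrow> A \<in> carrier_mat n n \<and>
     (\<forall>i<n. \<forall>j<n. A $$ (i, j) = cnj (A $$ (j, i)))"

definition psd_mat :: "nat \<Rightarrow> complex mat \<Rightarrow> bool" where
  "psd_mat n A \<longleftrightarrow> hermitian_mat n A \<and>
     (\<forall>v :: nat \<Rightarrow> complex. 0 \<le> Re (\<Sum>i<n. \<Sum>j<n. cnj (v i) * A $$ (i, j) * v j))"

definition density_mat :: "nat \<Rightarrow> complex mat \<Rightarrow> bool" where
  "density_mat n A \<longleftrightarrow> psd_mat n A \<and> (\<Sum>i<n. A $$ (i, i)) = 1"

definition separable :: "nat \<Rightarrow> nat \<Rightarrow> complex mat \<Rightarrow> bool" where
  "separable a b R \<longleftrightarrow> R \<in> carrier_mat (a*b) (a*b) \<and>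
     (\<exists>(N::nat) (p :: nat \<Rightarrow> real) (A :: nat \<Rightarrow> complex mat) (B :: nat \<Rightarrow> complex mat).
        (\<forall>k<N. 0 \<le> p k \<and> density_mat a (A k) \<and> density_mat b (B k)) \<and>
        (\<Sum>k<N. p k) = 1 \<and>
        (\<forall>r<a*b. \<forall>c<a*b. R $$ (r, c) = (\<Sum>k<N. of_real (p k) * kron (A k) (B k) $$ (r, c))))"

end

theory Submission
  imports Defs
begin

text \<open>Write \<open>\<rho>(G) = \<Sum>\<^sub>m p\<^sub>m A\<^sub>m \<otimes> B\<^sub>m\<close> with \<open>A\<^sub>m, B\<^sub>m\<close> positive semidefinite and let \<open>\<one>\<close> be the
  all-ones vector. Every row of the Laplacian sums to zero, so
  \<open>0 = \<one>\<^sup>T\<rho>\<one> = \<Sum>\<^sub>m p\<^sub>m (\<one>\<^sup>TA\<^sub>m\<one>) (\<one>\<^sup>TB\<^sub>m\<one>)\<close> is a sum of nonnegative terms. Hence for each \<open>m\<close>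
  with \<open>p\<^sub>m > 0\<close> one factor \<open>X\<close> has \<open>\<one>\<^sup>TX\<one> = 0\<close>, which for a positive semidefinite \<open>X\<close>
  forces \<open>X\<one> = 0\<close>. Therefore the realigned row sums
  \<open>\<Sum>\<^bsub>k,l\<^esub> \<rho>((i,l),(k,j)) = \<Sum>\<^sub>m p\<^sub>m (A\<^sub>m\<one>)\<^sub>i (\<one>\<^sup>TB\<^sub>m)\<^sub>j\<close> vanish too,
  and for the Laplacian such a sum is the degree of \<open>(i,j)\<close> in \<open>G\<close> minus its
  degree in \<open>\<Gamma>(G)\<close>.\<close>

lemma quadratic_nonneg_imp_linear_coeff_zero:
  fixes x d :: real
  assumes "\<And>t. 0 \<le> t * x + t\<^sup>2 * d"
  shows "x = 0"
proof (rule ccontr)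
  assume "x \<noteq> 0"
  define D where "D = \<bar>d\<bar> + 1"
  have "D > 0" by (simp add: D_def)
  have "(- x / D) * x + (- x / D)\<^sup>2 * d = x\<^sup>2 * (d - D) / D\<^sup>2"
    using \<open>D > 0\<close> by (simp add: field_simps power2_eq_square)
  also have "\<dots> < 0"
    using \<open>x \<noteq> 0\<close> \<open>D > 0\<close> by (intro divide_neg_pos mult_pos_neg) (auto simp: D_def)
  finally show False using assms[of "- x / D"] by linarith
qed

lemma index_pair_less:
  fixes i j a b :: nat
  assumes "i < a" "j < b"
  shows "i * b + j < a * b"
proof -
  have "i * b + j < (i + 1) * b" using assms(2) by simp
  also have "\<dots> \<le> a * b" using assms(1) by (intro mult_right_mono) auto
  finally show ?thesis .
qed

lemma kron_index:
  assumes "A \<in> carrier_mat a a'" "B \<in> carrier_mat b b'"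
    and "i < a" "k < a'" "j < b" "l < b'"
  shows "kron A B $$ (i * b + j, k * b' + l) = A $$ (i, k) * B $$ (j, l)"
  using assms index_pair_less[of i a j b] index_pair_less[of k a' l b'] by (simp add: kron_def)

lemma hermitian_col_sum:
  assumes "hermitian_mat n A" "j < n"
  shows "(\<Sum>l<n. A $$ (l, j)) = cnj (\<Sum>l<n. A $$ (j, l))"
proof -
  have "A $$ (l, j) = cnj (A $$ (j, l))" if "l < n" for l
    using assms that unfolding hermitian_mat_def by blast
  then show ?thesis by simp
qed

lemma psd_total_sum_nonneg:
  assumes "psd_mat n A"
  shows "0 \<le> (\<Sum>i<n. \<Sum>k<n. A $$ (i, k))"
proof -
  let ?s = "\<Sum>i<n. \<Sum>k<n. A $$ (i, k)"
  have herm: "hermitian_mat n A" using assms unfolding psd_mat_def by blast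
  have "?s = (\<Sum>i<n. \<Sum>k<n. A $$ (k, i))" by (rule sum.swap)
  also have "\<dots> = (\<Sum>i<n. cnj (\<Sum>k<n. A $$ (i, k)))"
    by (rule sum.cong[OF refl]) (simp add: hermitian_col_sum[OF herm])
  also have "\<dots> = cnj ?s" by simp
  finally have "Im ?s = Im (cnj ?s)" by (rule arg_cong)
  then have "Im ?s = 0" by (subst (asm) cnj.sel(2)) linarith
  moreover have "0 \<le> Re ?s"
    using assms[unfolded psd_mat_def, THEN conjunct2, rule_format, of "\<lambda>_. 1"] by simp
  ultimately show ?thesis by (simp add: less_eq_complex_def)
qed

lemma psd_row_sum_zero:
  assumes psd: "psd_mat n A" and total: "(\<Sum>i<n. \<Sum>k<n. A $$ (i, k)) = 0" and "i < n"
  shows "(\<Sum>k<n. A $$ (i, k)) = 0"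
proof -
  define r where "r = (\<Sum>k<n. A $$ (i, k))"
  have col: "(\<Sum>k<n. A $$ (k, i)) = cnj r"
    unfolding r_def using psd \<open>i < n\<close> by (simp add: psd_mat_def hermitian_col_sum)
  have "Re (cnj c * r) = 0" for c :: complex
  proof -
    have "0 \<le> t * (2 * Re (cnj c * r)) + t\<^sup>2 * Re (cnj c * c * A $$ (i, i))" for t :: real
    proof -
      txt \<open>Test the form on \<open>\<one> + t c e\<^sub>i\<close>: its constant term \<open>\<one>\<^sup>TA\<one>\<close> vanishes, so the
        linear term must vanish as well.\<close>
      define v where "v q = 1 + of_real t * c * (if q = i then 1 else 0)" for q
      have expand: "cnj (v p) * A $$ (p, q) * v q = A $$ (p, q)
          + (if q = i then of_real t * c * A $$ (p, i) else 0)
          + (if p = i then of_real t * cnj c * A $$ (i, q) else 0)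
          + (if q = i then if p = i then of_real t ^ 2 * cnj c * c * A $$ (i, i) else 0 else 0)"
        for p q by (simp add: v_def algebra_simps power2_eq_square)
      have row_delta: "(\<Sum>p<n. \<Sum>q<n. if p = i then g q else 0) = (\<Sum>q<n. g q)"
        for g :: "nat \<Rightarrow> complex" using \<open>i < n\<close> by (subst sum.swap) simp
      have "0 \<le> Re (\<Sum>p<n. \<Sum>q<n. cnj (v p) * A $$ (p, q) * v q)"
        using psd unfolding psd_mat_def by blast
      also have "(\<Sum>p<n. \<Sum>q<n. cnj (v p) * A $$ (p, q) * v q) =
          of_real t * c * (\<Sum>p<n. A $$ (p, i)) + of_real t * cnj c * r + of_real t ^ 2 * cnj c * c * A $$ (i, i)"
        unfolding expand using \<open>i < n\<close> total
        by (simp add: sum.distrib sum_distrib_left r_def row_delta)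
      finally show ?thesis by (simp add: col algebra_simps power2_eq_square)
    qed
    then show ?thesis using quadratic_nonneg_imp_linear_coeff_zero by fastforce
  qed
  from this[of 1] this[of \<i>] show ?thesis by (simp add: r_def complex_eq_iff)
qed

lemma sum_weighted_products_swap:
  fixes c :: "'m \<Rightarrow> 'a::comm_semiring_0"
  shows "(\<Sum>k\<in>K. \<Sum>l\<in>L. \<Sum>m\<in>M. c m * (f m k * g m l))
    = (\<Sum>m\<in>M. c m * (sum (f m) K * sum (g m) L))"
proof -
  have "(\<Sum>m\<in>M. c m * (sum (f m) K * sum (g m) L))
      = (\<Sum>m\<in>M. \<Sum>k\<in>K. \<Sum>l\<in>L. c m * (f m k * g m l))"
    unfolding sum_product by (simp only: sum_distrib_left)
  also have "\<dots> = (\<Sum>k\<in>K. \<Sum>m\<in>M. \<Sum>l\<in>L. c m * (f m k * g m l))"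
    by (rule sum.swap)
  also have "\<dots> = (\<Sum>k\<in>K. \<Sum>l\<in>L. \<Sum>m\<in>M. c m * (f m k * g m l))"
    by (rule sum.cong[OF refl], rule sum.swap)
  finally show ?thesis by (rule sym)
qed

lemma separable_decomposition:
  assumes "separable a b R"
  obtains N :: nat and p :: "nat \<Rightarrow> real" and A B :: "nat \<Rightarrow> complex mat" where
    "\<And>m. m < N \<Longrightarrow> 0 \<le> p m" "\<And>m. m < N \<Longrightarrow> psd_mat a (A m)" "\<And>m. m < N \<Longrightarrow> psd_mat b (B m)"
    "\<And>i j k l. i < a \<Longrightarrow> j < b \<Longrightarrow> k < a \<Longrightarrow> l < b \<Longrightarrow>
       R $$ (i * b + j, k * b + l) = (\<Sum>m<N. of_real (p m) * (A m $$ (i, k) * B m $$ (j, l)))"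
proof -
  from assms obtain N :: nat and p :: "nat \<Rightarrow> real" and A B :: "nat \<Rightarrow> complex mat" where
    dens: "\<forall>m<N. 0 \<le> p m \<and> density_mat a (A m) \<and> density_mat b (B m)" and
    R: "\<forall>r<a*b. \<forall>c<a*b. R $$ (r, c) = (\<Sum>m<N. of_real (p m) * kron (A m) (B m) $$ (r, c))"
    unfolding separable_def by blast
  have psd: "psd_mat a (A m)" "psd_mat b (B m)" if "m < N" for m
    using dens that unfolding density_mat_def by auto
  have carrier: "A m \<in> carrier_mat a a" "B m \<in> carrier_mat b b" if "m < N" for m
    using psd[OF that] unfolding psd_mat_def hermitian_mat_def by auto
  show thesis
  proof (rule that[of N p A B])
    fix i j k l assume ijkl: "i < a" "j < b" "k < a" "l < b"
    then have "R $$ (i * b + j, k * b + l) = (\<Sum>m<N. of_real (p m) * kron (A m) (B m) $$ (i * b + j, k * b + l))"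
      using R index_pair_less by blast
    also have "\<dots> = (\<Sum>m<N. of_real (p m) * (A m $$ (i, k) * B m $$ (j, l)))"
      using ijkl by (intro sum.cong refl) (simp add: kron_index[OF carrier])
    finally show "R $$ (i * b + j, k * b + l) = \<dots>" .
  qed (use dens psd in auto)
qed

lemma separable_realigned_row_sum_zero:
  assumes "separable a b R"
    and rows: "\<And>i j. i < a \<Longrightarrow> j < b \<Longrightarrow> (\<Sum>k<a. \<Sum>l<b. R $$ (i * b + j, k * b + l)) = 0"
    and "i < a" "j < b"
  shows "(\<Sum>k<a. \<Sum>l<b. R $$ (i * b + l, k * b + j)) = 0"
proof -
  obtain N :: nat and p :: "nat \<Rightarrow> real" and A B :: "nat \<Rightarrow> complex mat"
    where p: "\<And>m. m < N \<Longrightarrow> 0 \<le> p m"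
    and psdA: "\<And>m. m < N \<Longrightarrow> psd_mat a (A m)" and psdB: "\<And>m. m < N \<Longrightarrow> psd_mat b (B m)"
    and R: "\<And>i j k l. i < a \<Longrightarrow> j < b \<Longrightarrow> k < a \<Longrightarrow> l < b \<Longrightarrow>
       R $$ (i * b + j, k * b + l) = (\<Sum>m<N. of_real (p m) * (A m $$ (i, k) * B m $$ (j, l)))"
    using separable_decomposition[OF assms(1)] by blast
  define sA where "sA m = (\<Sum>i<a. \<Sum>k<a. A m $$ (i, k))" for m
  define sB where "sB m = (\<Sum>j<b. \<Sum>l<b. B m $$ (j, l))" for m
  have "(\<Sum>m<N. of_real (p m) * (sA m * sB m))
      = (\<Sum>i<a. \<Sum>j<b. \<Sum>m<N. of_real (p m) * ((\<Sum>k<a. A m $$ (i, k)) * (\<Sum>l<b. B m $$ (j, l))))"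
    unfolding sA_def sB_def by (rule sum_weighted_products_swap[symmetric])
  also have "\<dots> = (\<Sum>i<a. \<Sum>j<b. \<Sum>k<a. \<Sum>l<b. R $$ (i * b + j, k * b + l))"
    by (simp add: R sum_weighted_products_swap)
  also have "\<dots> = 0" by (simp add: rows)
  finally have total: "(\<Sum>m<N. of_real (p m) * (sA m * sB m)) = 0" .
  have nonneg: "\<And>m. m \<in> {..<N} \<Longrightarrow> 0 \<le> of_real (p m) * (sA m * sB m)"
    using p psd_total_sum_nonneg[OF psdA] psd_total_sum_nonneg[OF psdB]
    by (simp add: sA_def sB_def less_eq_complex_def)
  have product_zero: "of_real (p m) * (sA m * sB m) = 0" if "m < N" for m
    using sum_nonneg_eq_0_iff[OF finite_lessThan nonneg] total that by simp
  have term_zero: "of_real (p m) * ((\<Sum>k<a. A m $$ (i, k)) * (\<Sum>l<b. B m $$ (l, j))) = 0"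
    if "m < N" for m
  proof -
    have "p m = 0 \<or> sA m = 0 \<or> sB m = 0" using product_zero[OF \<open>m < N\<close>] by simp
    moreover have "(\<Sum>k<a. A m $$ (i, k)) = 0" if "sA m = 0"
      using psd_row_sum_zero[OF psdA[OF \<open>m < N\<close>]] \<open>i < a\<close> that by (simp add: sA_def)
    moreover have "(\<Sum>l<b. B m $$ (l, j)) = 0" if "sB m = 0"
      using psd_row_sum_zero[OF psdB[OF \<open>m < N\<close>]] \<open>j < b\<close> that psdB[OF \<open>m < N\<close>]
      by (simp add: sB_def psd_mat_def hermitian_col_sum)
    ultimately show ?thesis by auto
  qed
  have "(\<Sum>k<a. \<Sum>l<b. R $$ (i * b + l, k * b + j))
      = (\<Sum>k<a. \<Sum>l<b. \<Sum>m<N. of_real (p m) * (A m $$ (i, k) * B m $$ (l, j)))"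
    using assms(3,4) by (simp add: R)
  also have "\<dots> = 0" by (simp add: sum_weighted_products_swap term_zero)
  finally show ?thesis .
qed

lemma finite_grid: "finite (grid a b)"
  by (simp add: grid_def)

lemma sum_grid: "(\<Sum>k<a. \<Sum>l<b. f (k, l)) = (\<Sum>w\<in>grid a b. f w)"
  by (simp add: grid_def sum.cartesian_product lessThan_atLeast0)

lemma grid_graph_finite:
  assumes "grid_graph a b E"
  shows "finite E"
proof (rule finite_subset)
  show "E \<subseteq> Pow (grid a b)"
  proof
    fix e assume "e \<in> E"
    then obtain u v where "e = {u, v}" "u \<in> grid a b" "v \<in> grid a b"
      using assms unfolding grid_graph_def by blast
    then show "e \<in> Pow (grid a b)" by simp
  qed
qed (simp add: finite_grid)

lemma degree_eq_card_neighbours: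
  assumes "grid_graph a b E" "u \<in> grid a b"
  shows "degree E u = card {w \<in> grid a b. {u, w} \<in> E}"
proof -
  have "bij_betw (\<lambda>w. {u, w}) {w \<in> grid a b. {u, w} \<in> E} {e \<in> E. u \<in> e}"
  proof (rule bij_betwI')
    fix e assume "e \<in> {e \<in> E. u \<in> e}"
    moreover obtain v w where "e = {v, w}" "v \<in> grid a b" "w \<in> grid a b"
      using assms(1) calculation unfolding grid_graph_def by blast
    ultimately consider "e = {u, w}" "w \<in> grid a b" | "e = {u, v}" "v \<in> grid a b"
      by (auto simp: insert_commute)
    then show "\<exists>w \<in> {w \<in> grid a b. {u, w} \<in> E}. e = {u, w}"
      using \<open>e \<in> {e \<in> E. u \<in> e}\<close> by cases blast+
  qed (auto simp: doubleton_eq_iff)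
  then show ?thesis unfolding degree_def by (simp add: bij_betw_same_card)
qed

lemma partial_transpose_edge_iff:
  "{(i, j), (k, l)} \<in> partial_transpose E \<longleftrightarrow> {(i, l), (k, j)} \<in> E"
proof
  assume "{(i, j), (k, l)} \<in> partial_transpose E"
  then obtain i' j' k' l' where "{(i, j), (k, l)} = {(k', j'), (i', l')}" "{(i', j'), (k', l')} \<in> E"
    unfolding partial_transpose_def by blast
  then show "{(i, l), (k, j)} \<in> E" by (auto simp: doubleton_eq_iff insert_commute)
next
  assume "{(i, l), (k, j)} \<in> E"
  then have "{(k, j), (i, l)} \<in> E" by (simp add: insert_commute)
  then show "{(i, j), (k, l)} \<in> partial_transpose E"
    unfolding partial_transpose_def by blast
qed

lemma grid_graph_partial_transpose:
  assumes "grid_graph a b E"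
  shows "grid_graph a b (partial_transpose E)"
  unfolding grid_graph_def
proof
  fix e assume "e \<in> partial_transpose E"
  then obtain i j k l where e: "e = {(k, j), (i, l)}" and "{(i, j), (k, l)} \<in> E"
    unfolding partial_transpose_def by blast
  then obtain u v where "{(i, j), (k, l)} = {u, v}" "u \<noteq> v" "u \<in> grid a b" "v \<in> grid a b"
    using assms unfolding grid_graph_def by blast
  then have "i < a" "k < a" "j < b" "l < b" "(i, j) \<noteq> (k, l)"
    by (auto simp: doubleton_eq_iff grid_def)
  then show "\<exists>u v. e = {u, v} \<and> u \<noteq> v \<and> u \<in> grid a b \<and> v \<in> grid a b"
    using e by (auto simp: grid_def)
qed

definition laplacian_entry :: "(nat \<times> nat) set set \<Rightarrow> nat \<times> nat \<Rightarrow> nat \<times> nat \<Rightarrow> complex" where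
  "laplacian_entry E u w = (if u = w then of_nat (degree E u) else 0) - (if {u, w} \<in> E then 1 else 0)"

lemma rho_index:
  assumes "i < a" "j < b" "k < a" "l < b"
  shows "rho a b E $$ (i * b + j, k * b + l) = laplacian_entry E (i, j) (k, l) / (2 * of_nat (card E))"
proof -
  have vtx: "vtx b (i * b + j) = (i, j)" "vtx b (k * b + l) = (k, l)"
    using assms by (simp_all add: vtx_def)
  have "(i * b + j = k * b + l) \<longleftrightarrow> (i, j) = (k, l)"
  proof
    assume "i * b + j = k * b + l"
    then show "(i, j) = (k, l)" using vtx by metis
  qed simp
  then show ?thesis
    using assms index_pair_less[of i a j b] index_pair_less[of k a l b]
    by (simp add: rho_def laplacian_mat_def degree_mat_def adjacency_mat_def laplacian_entry_def vtx)
qed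

lemma sum_grid_delta_minus_neighbours:
  fixes d :: complex
  assumes "grid_graph a b E" "u \<in> grid a b"
  shows "(\<Sum>w\<in>grid a b. (if u = w then d else 0) - (if {u, w} \<in> E then 1 else 0)) = d - of_nat (degree E u)"
proof -
  have neighbours: "(\<Sum>w\<in>grid a b. if {u, w} \<in> E then 1 else 0) = (of_nat (degree E u) :: complex)"
    using sum.inter_filter[OF finite_grid, where g="\<lambda>_. 1 :: complex" and P="\<lambda>w. {u, w} \<in> E"]
    by (simp add: degree_eq_card_neighbours[OF assms])
  have "(\<Sum>w\<in>grid a b. (if u = w then d else 0) - (if {u, w} \<in> E then 1 else 0))
      = (\<Sum>w\<in>grid a b. if u = w then d else 0) - (\<Sum>w\<in>grid a b. if {u, w} \<in> E then 1 else 0)"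
    by (rule sum_subtractf)
  also have "\<dots> = d - of_nat (degree E u)"
    using assms(2) by (simp add: neighbours finite_grid)
  finally show ?thesis .
qed

lemma laplacian_row_sum:
  assumes "grid_graph a b E" "i < a" "j < b"
  shows "(\<Sum>k<a. \<Sum>l<b. laplacian_entry E (i, j) (k, l)) = 0"
proof -
  have "(i, j) \<in> grid a b" using assms by (simp add: grid_def)
  have "(\<Sum>k<a. \<Sum>l<b. laplacian_entry E (i, j) (k, l)) = (\<Sum>w\<in>grid a b. laplacian_entry E (i, j) w)"
    by (rule sum_grid)
  also have "\<dots> = of_nat (degree E (i, j)) - of_nat (degree E (i, j))"
    unfolding laplacian_entry_def by (rule sum_grid_delta_minus_neighbours[OF assms(1) \<open>(i, j) \<in> grid a b\<close>])
  finally show ?thesis by simp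
qed

text \<open>Off the diagonal, the entry of \<open>L(G)\<close> at \<open>((i,l),(k,j))\<close> is minus the adjacency of
  \<open>(i,j)\<close> and \<open>(k,l)\<close> in \<open>\<Gamma>(G)\<close>.\<close>

lemma laplacian_realigned_row_sum:
  assumes "grid_graph a b E" "i < a" "j < b"
  shows "(\<Sum>k<a. \<Sum>l<b. laplacian_entry E (i, l) (k, j))
    = of_nat (degree E (i, j)) - of_nat (degree (partial_transpose E) (i, j))"
proof -
  have "(i, j) \<in> grid a b" using assms by (simp add: grid_def)
  define g where "g w = (if (i, j) = w then of_nat (degree E (i, j)) else 0)
    - (if {(i, j), w} \<in> partial_transpose E then 1 else (0 :: complex))" for w
  have "(\<Sum>k<a. \<Sum>l<b. laplacian_entry E (i, l) (k, j)) = (\<Sum>k<a. \<Sum>l<b. g (k, l))"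
    by (intro sum.cong refl) (auto simp: g_def laplacian_entry_def partial_transpose_edge_iff)
  also have "\<dots> = (\<Sum>w\<in>grid a b. g w)" by (rule sum_grid)
  also have "\<dots> = of_nat (degree E (i, j)) - of_nat (degree (partial_transpose E) (i, j))"
    unfolding g_def
    by (rule sum_grid_delta_minus_neighbours[OF grid_graph_partial_transpose[OF assms(1)] \<open>(i, j) \<in> grid a b\<close>])
  finally show ?thesis .
qed

lemma degree_mat_eqI:
  assumes "\<And>i j. i < a \<Longrightarrow> j < b \<Longrightarrow> degree E (i, j) = degree F (i, j)"
  shows "degree_mat a b E = degree_mat a b F"
proof (rule eq_matI)
  fix r c assume "r < dim_row (degree_mat a b F)" "c < dim_col (degree_mat a b F)"
  then have "r < a * b" "c < a * b" by (simp_all add: degree_mat_def)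
  moreover have "r div b < a" using \<open>r < a * b\<close> by (simp add: less_mult_imp_div_less)
  moreover have "r mod b < b" using \<open>r < a * b\<close> by (cases "b = 0") simp_all
  ultimately show "degree_mat a b E $$ (r, c) = degree_mat a b F $$ (r, c)"
    using assms by (auto simp: degree_mat_def vtx_def)
qed (simp_all add: degree_mat_def)

theorem mainTheorem4:
  fixes a b :: nat and E :: "(nat \<times> nat) set set"
  assumes "grid_graph a b E"
    and "E \<noteq> {}"
    and "separable a b (rho a b E)"
  shows "degree_mat a b E = degree_mat a b (partial_transpose E)"
proof (rule degree_mat_eqI)
  have "card E \<noteq> 0" using assms(1,2) grid_graph_finite by auto
  then have scale: "(2 * of_nat (card E) :: complex) \<noteq> 0" by simp
  have rows: "(\<Sum>k<a. \<Sum>l<b. rho a b E $$ (i * b + j, k * b + l)) = 0" if "i < a" "j < b" for i j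
    using that by (simp add: rho_index laplacian_row_sum[OF assms(1)] sum_divide_distrib[symmetric])
  fix i j assume "i < a" "j < b"
  have "(\<Sum>k<a. \<Sum>l<b. rho a b E $$ (i * b + l, k * b + j)) = 0"
    using separable_realigned_row_sum_zero[OF assms(3) rows \<open>i < a\<close> \<open>j < b\<close>] .
  then have "(\<Sum>k<a. \<Sum>l<b. laplacian_entry E (i, l) (k, j)) = 0"
    using \<open>i < a\<close> \<open>j < b\<close> scale by (simp add: rho_index sum_divide_distrib[symmetric])
  then show "degree E (i, j) = degree (partial_transpose E) (i, j)"
    using laplacian_realigned_row_sum[OF assms(1) \<open>i < a\<close> \<open>j < b\<close>] by simp
qed

end
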